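(* Let $T$ be a tree such that every vertex of $A_T$ has degree at most $3$ in $T$. Then $|D_T|\le 2|A_T|+1$, with equality only if $T[A_T\cup D_T]$ is connected, every vertex of $A_T$ has degree $3$, $A_T$ is independent and $C_T=\emptyset$; moreover $\nu(T)\geq \frac{n(T)-1}{3}$.
   Context: $\nu(T)$ is the matching number and $n(T)$ the number of vertices. Gallai–Edmonds sets: $D_T$ is the set of vertices not covered by at least one maximum matching of $T$, $A_T=N_T(D_T)\setminus D_T$, and $C_T=V(T)\setminus(A_T\cup D_T)$. *)

theory Defs
  imports Complex_Main
begin

definition simple_graph :: "'a set \<Rightarrow> 'a set set \<Rightarrow> bool" where
  "simple_graph V E \<longleftrightarrow> finite V \<and>
     (\<forall>e\<in>E. \<exists>u v. e = {u, v} \<and> u \<noteq> v \<and> u \<in> V \<and> v \<in> V)"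

definition walk :: "'a set set \<Rightarrow> 'a list \<Rightarrow> bool" where
  "walk E xs \<longleftrightarrow> xs \<noteq> [] \<and> (\<forall>i < length xs - 1. {xs ! i, xs ! (i + 1)} \<in> E)"

definition connected_graph :: "'a set \<Rightarrow> 'a set set \<Rightarrow> bool" where
  "connected_graph V E \<longleftrightarrow>
     (\<forall>u\<in>V. \<forall>v\<in>V. \<exists>xs. walk E xs \<and> set xs \<subseteq> V \<and> hd xs = u \<and> last xs = v)"

definition is_cycle :: "'a set set \<Rightarrow> 'a list \<Rightarrow> bool" where
  "is_cycle E xs \<longleftrightarrow> length xs \<ge> 3 \<and> distinct xs \<and> walk E xs \<and> {last xs, hd xs} \<in> E"

definition is_tree :: "'a set \<Rightarrow> 'a set set \<Rightarrow> bool" where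
  "is_tree V E \<longleftrightarrow> simple_graph V E \<and> V \<noteq> {} \<and> connected_graph V E \<and>
     \<not> (\<exists>xs. is_cycle E xs)"

definition induced_edges :: "'a set set \<Rightarrow> 'a set \<Rightarrow> 'a set set" where
  "induced_edges E S = {e \<in> E. e \<subseteq> S}"

definition degree :: "'a set set \<Rightarrow> 'a \<Rightarrow> nat" where
  "degree E v = card {e \<in> E. v \<in> e}"

definition neighbours :: "'a set set \<Rightarrow> 'a \<Rightarrow> 'a set" where
  "neighbours E v = {u. {u, v} \<in> E}"

definition independent_set :: "'a set set \<Rightarrow> 'a set \<Rightarrow> bool" where
  "independent_set E S \<longleftrightarrow> (\<forall>u\<in>S. \<forall>v\<in>S. {u, v} \<notin> E)"

definition matching :: "'a set set \<Rightarrow> 'a set set \<Rightarrow> bool" where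
  "matching E M \<longleftrightarrow> M \<subseteq> E \<and> (\<forall>e1\<in>M. \<forall>e2\<in>M. e1 \<noteq> e2 \<longrightarrow> e1 \<inter> e2 = {})"

definition matching_number :: "'a set set \<Rightarrow> nat" where
  "matching_number E = Max (card ` {M. matching E M})"

definition max_matching :: "'a set set \<Rightarrow> 'a set set \<Rightarrow> bool" where
  "max_matching E M \<longleftrightarrow> matching E M \<and> card M = matching_number E"

definition GE_D :: "'a set \<Rightarrow> 'a set set \<Rightarrow> 'a set" where
  "GE_D V E = {v \<in> V. \<exists>M. max_matching E M \<and> v \<notin> \<Union>M}"

definition GE_A :: "'a set \<Rightarrow> 'a set set \<Rightarrow> 'a set" where
  "GE_A V E = (\<Union>v\<in>GE_D V E. neighbours E v) - GE_D V E"

definition GE_C :: "'a set \<Rightarrow> 'a set set \<Rightarrow> 'a set" where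
  "GE_C V E = V - (GE_A V E \<union> GE_D V E)"

end

theory Submission
  imports Defs
begin

(*
  In a forest, two facts about the Gallai--Edmonds sets carry the argument: D is independent,
  and every maximum matching pairs each vertex of A with a vertex of D. Both come from rerouting
  a maximum matching along an alternating path, which in a forest can never come back to a
  neighbour of its starting vertex.

  Hence every edge meets A exactly once, except edges inside A (twice) and inside C (never).
  Counting the |V| - 1 edges of the tree, and using e(C) <= |C| - 1 when C is nonempty, gives
  |A| + |D| + e(A) + [C nonempty] <= (sum of the degrees in A) + 1 <= 3|A| + 1,
  which is the bound together with its equality case. Finally, the vertices exposed by a maximum
  matching M lie in D but are not partners of A, so |V - \<Union>M| <= |D| - |A| <= |A| + 1; with
  |A| + |D| <= |V| this gives 3 |V - \<Union>M| <= |V| + 2, and |V| = 2 \<nu> + |V - \<Union>M| yields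
  |V| <= 3 \<nu> + 1.
*)

definition forest :: "'a set \<Rightarrow> 'a set set \<Rightarrow> bool" where
  "forest V E \<longleftrightarrow> simple_graph V E \<and> (\<nexists>xs. is_cycle E xs)"

lemma tree_imp_forest: "is_tree V E \<Longrightarrow> forest V E"
  unfolding is_tree_def forest_def by blast

lemma simple_graph_finite_vertices: "simple_graph V E \<Longrightarrow> finite V"
  unfolding simple_graph_def by simp

lemma simple_graph_finite_edges: "simple_graph V E \<Longrightarrow> finite E"
  unfolding simple_graph_def by (auto intro: finite_subset[of E "Pow V"])

lemma simple_graph_edge_subset: "simple_graph V E \<Longrightarrow> e \<in> E \<Longrightarrow> e \<subseteq> V"
  unfolding simple_graph_def by fastforce

lemma simple_graph_card_edge: "simple_graph V E \<Longrightarrow> e \<in> E \<Longrightarrow> card e = 2"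
  unfolding simple_graph_def by fastforce

lemma simple_graph_edge_doubleton:
  "simple_graph V E \<Longrightarrow> {a, b} \<in> E \<Longrightarrow> a \<noteq> b \<and> a \<in> V \<and> b \<in> V"
  unfolding simple_graph_def by (fastforce simp: doubleton_eq_iff)

lemma simple_graph_edge_at:
  assumes "simple_graph V E" "e \<in> E" "x \<in> e"
  obtains y where "e = {x, y}" "y \<noteq> x" "x \<in> V" "y \<in> V"
  using assms unfolding simple_graph_def by (fastforce simp: insert_commute)

lemma matching_edge_unique:
  "matching E M \<Longrightarrow> e1 \<in> M \<Longrightarrow> e2 \<in> M \<Longrightarrow> x \<in> e1 \<Longrightarrow> x \<in> e2 \<Longrightarrow> e1 = e2"
  unfolding matching_def by blast

lemma matching_finite: "finite E \<Longrightarrow> matching E M \<Longrightarrow> finite M"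
  unfolding matching_def by (blast intro: finite_subset)

lemma finite_matchings: "finite E \<Longrightarrow> finite {M. matching E M}"
  unfolding matching_def by (auto intro: finite_subset[of _ "Pow E"])

lemma card_le_matching_number: "finite E \<Longrightarrow> matching E M \<Longrightarrow> card M \<le> matching_number E"
  unfolding matching_number_def by (auto intro: Max_ge simp: finite_matchings)

lemma max_matching_exists: "finite E \<Longrightarrow> \<exists>M. max_matching E M"
proof -
  assume "finite E"
  moreover have "matching E {}" unfolding matching_def by simp
  ultimately have "matching_number E \<in> card ` {M. matching E M}"
    unfolding matching_number_def by (intro Max_in) (auto simp: finite_matchings)
  then show ?thesis unfolding max_matching_def by auto
qed

lemma card_Union_matching:
  assumes "simple_graph V E" "matching E M"
  shows "card (\<Union>M) = 2 * card M"
proof -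
  have card2: "\<And>e. e \<in> M \<Longrightarrow> card e = 2"
    using assms simple_graph_card_edge unfolding matching_def by blast
  then have "card (\<Union>M) = sum card M"
    using assms(2) unfolding matching_def
    by (intro card_Union_disjoint) (auto simp: pairwise_def disjnt_def intro: card_ge_0_finite)
  then show ?thesis using card2 by simp
qed

lemma max_matching_not_augmentable:
  assumes "simple_graph V E" "max_matching E M" "{u, w} \<in> E" "u \<notin> \<Union>M" "w \<notin> \<Union>M"
  shows False
proof -
  have M: "matching E M" "card M = matching_number E"
    using assms(2) unfolding max_matching_def by auto
  have "matching E (insert {u, w} M)" using M(1) assms(3-5) unfolding matching_def by blast
  then have "card (insert {u, w} M) \<le> card M"
    using M card_le_matching_number simple_graph_finite_edges[OF assms(1)] by metis
  moreover have "finite M" using matching_finite[OF simple_graph_finite_edges[OF assms(1)] M(1)] .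
  moreover have "{u, w} \<notin> M" using assms(4) by blast
  ultimately show False by simp
qed

lemma max_matching_shift:
  assumes sg: "simple_graph V E" and M: "max_matching E M"
    and uv: "{u, v} \<in> M" and vw: "{v, w} \<in> E" and w: "w \<notin> \<Union>M"
  defines "M' \<equiv> insert {v, w} (M - {{u, v}})"
  shows "max_matching E M'" "u \<notin> \<Union>M'"
proof -
  have m: "matching E M" and c: "card M = matching_number E"
    using M unfolding max_matching_def by auto
  have "finite M" using matching_finite[OF simple_graph_finite_edges[OF sg] m] .
  have uw: "u \<noteq> w" "v \<noteq> w" using uv w by auto
  have "u \<noteq> v" using uv m simple_graph_edge_doubleton[OF sg] unfolding matching_def by blast
  have only: "h = {u, v}" if "h \<in> M" "u \<in> h \<or> v \<in> h" for h
    using matching_edge_unique[OF m that(1) uv] that(2) by blast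
  have "matching E M'"
    using m vw w only unfolding M'_def matching_def by blast
  moreover have "card M' = card M"
  proof -
    have "{v, w} \<notin> M - {{u, v}}" using w by blast
    then have "card M' = Suc (card (M - {{u, v}}))" using \<open>finite M\<close> by (simp add: M'_def)
    also have "\<dots> = card M" using card_Suc_Diff1[OF \<open>finite M\<close> uv] .
    finally show ?thesis .
  qed
  ultimately show "max_matching E M'" using c unfolding max_matching_def by simp
  show "u \<notin> \<Union>M'" using only uw \<open>u \<noteq> v\<close> unfolding M'_def by blast
qed

lemma walk_singleton: "walk E [x]"
  unfolding walk_def by simp

lemma walk_Cons: "walk E xs \<Longrightarrow> {a, hd xs} \<in> E \<Longrightarrow> walk E (a # xs)"
  unfolding walk_def
proof (intro conjI allI impI)
  fix i assume w: "xs \<noteq> [] \<and> (\<forall>i<length xs - 1. {xs ! i, xs ! (i + 1)} \<in> E)"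
    and "{a, hd xs} \<in> E" and "i < length (a # xs) - 1"
  then show "{(a # xs) ! i, (a # xs) ! (i + 1)} \<in> E"
    by (cases i) (auto simp: hd_conv_nth)
qed simp

lemma walk_tl: "walk E (a # xs) \<Longrightarrow> xs \<noteq> [] \<Longrightarrow> walk E xs"
proof -
  assume w: "walk E (a # xs)" and "xs \<noteq> []"
  have "{xs ! i, xs ! (i + 1)} \<in> E" if "i < length xs - 1" for i
    using w that unfolding walk_def by (metis Suc_eq_plus1 Suc_less_eq length_Cons less_diff_conv nth_Cons_Suc)
  then show ?thesis using \<open>xs \<noteq> []\<close> unfolding walk_def by blast
qed

lemma walk_snoc: "walk E xs \<Longrightarrow> {last xs, u} \<in> E \<Longrightarrow> walk E (xs @ [u])"
  unfolding walk_def
proof (intro conjI allI impI)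
  fix i assume w: "xs \<noteq> [] \<and> (\<forall>i<length xs - 1. {xs ! i, xs ! (i + 1)} \<in> E)"
    and h: "{last xs, u} \<in> E" and i: "i < length (xs @ [u]) - 1"
  show "{(xs @ [u]) ! i, (xs @ [u]) ! (i + 1)} \<in> E"
  proof (cases "i = length xs - 1")
    case True then show ?thesis using w h by (simp add: nth_append last_conv_nth)
  next
    case False
    then have "i < length xs - 1" using i by simp
    moreover have "(xs @ [u]) ! i = xs ! i" "(xs @ [u]) ! (i + 1) = xs ! (i + 1)"
      using \<open>i < length xs - 1\<close> by (auto simp: nth_append)
    ultimately show ?thesis using w by simp
  qed
qed simp

lemma walk_take: "walk E xs \<Longrightarrow> 0 < m \<Longrightarrow> walk E (take m xs)"
  unfolding walk_def by auto

lemma walk_drop: "walk E xs \<Longrightarrow> j < length xs \<Longrightarrow> walk E (drop j xs)"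
  unfolding walk_def by auto

lemma walk_mono: "walk E' xs \<Longrightarrow> E' \<subseteq> E \<Longrightarrow> walk E xs"
  unfolding walk_def by blast

lemma is_cycle_take:
  assumes "distinct xs" "walk E xs" "2 \<le> k" "k < length xs" "{xs ! k, hd xs} \<in> E"
  shows "is_cycle E (take (Suc k) xs)"
proof -
  have "xs \<noteq> []" using assms(4) by auto
  then have "last (take (Suc k) xs) = xs ! k"
    using assms(4) by (simp add: last_conv_nth)
  then show ?thesis using assms walk_take[OF assms(2)]
    by (auto simp: is_cycle_def)
qed

text \<open>M is rerouted along the path xs from x (whose first edge lies in M) into a maximum
  matching M' exposing x; M and M' differ only on edges inside xs. The last clause, that every
  later vertex of xs meets the symmetric difference of M and N, keeps the inductive construction
  of such paths from revisiting x and its M-partner.\<close>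
definition rerouting ::
  "'a set set \<Rightarrow> 'a set set \<Rightarrow> 'a set set \<Rightarrow> 'a \<Rightarrow> 'a list \<Rightarrow> 'a set set \<Rightarrow> bool" where
  "rerouting E M N x xs M' \<longleftrightarrow>
     max_matching E M' \<and> x \<notin> \<Union>M' \<and> walk E xs \<and> distinct xs \<and> hd xs = x
     \<and> (2 \<le> length xs \<longrightarrow> {x, xs ! 1} \<in> M)
     \<and> (\<forall>e\<in>M. e \<inter> set xs \<noteq> {} \<longrightarrow> e \<subseteq> set xs)
     \<and> (\<forall>e\<in>M. e \<inter> set xs = {} \<longrightarrow> e \<in> M')
     \<and> (\<forall>e\<in>M'. e \<in> M \<or> e \<subseteq> set xs)
     \<and> (\<forall>v\<in>set xs - {x}. \<exists>e\<in>(M - N) \<union> (N - M). v \<in> e)"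

lemma rerouting_singleton: "max_matching E M \<Longrightarrow> x \<notin> \<Union>M \<Longrightarrow> rerouting E M N x [x] M"
  unfolding rerouting_def by (auto simp: walk_singleton)

lemma rerouting_Cons:
  assumes sg: "simple_graph V E" and M: "max_matching E M" and N: "matching E N"
    and x: "x \<notin> \<Union>N" and xv1: "{x, v1} \<in> M" and v1v2: "{v1, v2} \<in> N"
    and R: "rerouting E M (insert {v1, x} (N - {{v2, v1}})) v2 ys M''"
  shows "rerouting E M N x (x # v1 # ys) (insert {v1, v2} (M'' - {{x, v1}}))"
proof -
  define N' where "N' = insert {v1, x} (N - {{v2, v1}})"
  define M' where "M' = insert {v1, v2} (M'' - {{x, v1}})"
  have m: "matching E M" using M unfolding max_matching_def by simp
  have "{v1, v2} \<in> E" using N v1v2 unfolding matching_def by blast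
  then have v12: "v1 \<noteq> v2" using simple_graph_edge_doubleton[OF sg] by blast
  have v2x: "v2 \<noteq> x" using x v1v2 by blast
  have "{x, v1} \<in> E" using m xv1 unfolding matching_def by blast
  then have xv: "x \<noteq> v1" using simple_graph_edge_doubleton[OF sg] by blast
  have R': "max_matching E M''" "v2 \<notin> \<Union>M''" "walk E ys" "distinct ys" "hd ys = v2"
    "\<And>e. e \<in> M \<Longrightarrow> e \<inter> set ys \<noteq> {} \<Longrightarrow> e \<subseteq> set ys"
    "\<And>e. e \<in> M \<Longrightarrow> e \<inter> set ys = {} \<Longrightarrow> e \<in> M''"
    "\<And>e. e \<in> M'' \<Longrightarrow> e \<in> M \<or> e \<subseteq> set ys"
    "\<And>v. v \<in> set ys - {v2} \<Longrightarrow> \<exists>e\<in>(M - N') \<union> (N' - M). v \<in> e"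
    using R unfolding rerouting_def N'_def by auto
  have v2ys: "v2 \<in> set ys" using R'(3,5) unfolding walk_def by auto
  have "e = {x, v1}" if "v \<in> {x, v1}" "v \<in> e" "e \<in> M \<union> N'" for e v
    using that matching_edge_unique[OF m _ xv1] matching_edge_unique[OF N _ v1v2] x
    unfolding N'_def by (auto simp: insert_commute)
  moreover have "{x, v1} \<in> M \<inter> N'" using xv1 unfolding N'_def by (simp add: insert_commute)
  ultimately have "v \<notin> set ys" if "v \<in> {x, v1}" for v
    using R'(9)[of v] that v2x v12 by blast
  then have off_ys: "x \<notin> set ys" "v1 \<notin> set ys" by auto
  have "{x, v1} \<in> M''" using R'(7)[OF xv1] off_ys by blast
  then have M': "max_matching E M'" "x \<notin> \<Union>M'"
    using max_matching_shift[OF sg R'(1) _ \<open>{v1, v2} \<in> E\<close> R'(2)] unfolding M'_def by auto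
  have sym_diff: "(M - N') \<union> (N' - M) \<subseteq> (M - N) \<union> (N - M)"
    using xv1 v2x v1v2 matching_edge_unique[OF m _ xv1, of "{v2, v1}" v1]
    unfolding N'_def by (auto simp: insert_commute doubleton_eq_iff)
  have "{v1, v2} \<notin> M"
    using matching_edge_unique[OF m _ xv1, of "{v1, v2}" v1] v2x v12 by (auto simp: doubleton_eq_iff)
  show ?thesis
    unfolding rerouting_def M'_def[symmetric]
  proof (intro conjI ballI impI)
    show "walk E (x # v1 # ys)"
      using walk_Cons[OF walk_Cons[OF R'(3)]] R'(5) \<open>{v1, v2} \<in> E\<close> \<open>{x, v1} \<in> E\<close> by simp
    show "distinct (x # v1 # ys)" using R'(4) off_ys xv by simp
    show "e \<subseteq> set (x # v1 # ys)" if "e \<in> M" "e \<inter> set (x # v1 # ys) \<noteq> {}" for e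
      using that R'(6)[of e] matching_edge_unique[OF m that(1) xv1] by auto
    show "e \<in> M'" if "e \<in> M" "e \<inter> set (x # v1 # ys) = {}" for e
      using that R'(7)[of e] unfolding M'_def by auto
    show "e \<in> M \<or> e \<subseteq> set (x # v1 # ys)" if "e \<in> M'" for e
      using that R'(8)[of e] v2ys unfolding M'_def by auto
    show "\<exists>e\<in>(M - N) \<union> (N - M). v \<in> e" if "v \<in> set (x # v1 # ys) - {x}" for v
      using that R'(9)[of v] sym_diff xv1 x v1v2 \<open>{v1, v2} \<notin> M\<close> by auto
  qed (use M' xv1 in auto)
qed

lemma rerouting_exists:
  assumes sg: "simple_graph V E" and M: "max_matching E M"
  shows "max_matching E N \<Longrightarrow> x \<notin> \<Union>N \<Longrightarrow> \<exists>xs M'. rerouting E M N x xs M'"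
proof (induction "card (N - M)" arbitrary: N x rule: less_induct)
  case less
  have N: "matching E N" using less.prems unfolding max_matching_def by simp
  show ?case
  proof (cases "x \<in> \<Union>M")
    case False
    then show ?thesis using rerouting_singleton[OF M] by blast
  next
    case True
    have ME: "M \<subseteq> E" and NE: "N \<subseteq> E"
      using M N unfolding max_matching_def matching_def by auto
    obtain e where "e \<in> M" "x \<in> e" using True by blast
    then obtain v1 where xv1: "{x, v1} \<in> M"
      using ME simple_graph_edge_at[OF sg, of e x] by blast
    have "v1 \<in> \<Union>N"
      using max_matching_not_augmentable[OF sg less.prems(1) _ less.prems(2)] xv1 ME by blast
    then obtain f where "f \<in> N" "v1 \<in> f" by blast
    then obtain v2 where "{v1, v2} \<in> N"
      using NE simple_graph_edge_at[OF sg, of f v1] by blast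
    then have v1v2: "{v2, v1} \<in> N" by (simp add: insert_commute)
    define N' where "N' = insert {v1, x} (N - {{v2, v1}})"
    have N': "max_matching E N'" "v2 \<notin> \<Union>N'"
      using max_matching_shift[OF sg less.prems(1) v1v2 _ less.prems(2)] xv1 ME
      unfolding N'_def by (auto simp: insert_commute)
    have "{v2, v1} \<notin> M"
      using matching_edge_unique[of E M "{v2, v1}" "{x, v1}" v1] M xv1 v1v2 less.prems(2)
      unfolding max_matching_def by (auto simp: doubleton_eq_iff)
    then have "N' - M = (N - M) - {{v2, v1}}"
      using xv1 unfolding N'_def by (auto simp: insert_commute)
    moreover have "finite N" using matching_finite[OF simple_graph_finite_edges[OF sg] N] .
    ultimately have "card (N' - M) < card (N - M)"
      using v1v2 \<open>{v2, v1} \<notin> M\<close> by (metis DiffI card_Diff1_less finite_Diff)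
    then obtain ys M'' where "rerouting E M N' v2 ys M''"
      using less.hyps N' by blast
    then show ?thesis
      using rerouting_Cons[OF sg M N less.prems(2) xv1, of v2] v1v2
      unfolding N'_def by (auto simp: insert_commute)
  qed
qed

text \<open>If a neighbour a of d were on the rerouting path, the path would close a cycle through the
  edge ad; so in a forest the rerouting leaves the edges at a untouched.\<close>
lemma forest_exposing_matching_agreeing_at:
  assumes F: "forest V E" and M: "max_matching E M" and N: "max_matching E N"
    and d: "d \<notin> \<Union>N" and ad: "{a, d} \<in> E" "{a, d} \<notin> M"
  obtains M' where "max_matching E M'" "d \<notin> \<Union>M'" "{e \<in> M'. a \<in> e} = {e \<in> M. a \<in> e}"
proof -
  have sg: "simple_graph V E" and acyclic: "\<And>xs. \<not> is_cycle E xs"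
    using F unfolding forest_def by auto
  obtain xs M' where R: "rerouting E M N d xs M'"
    using rerouting_exists[OF sg M N d] by blast
  have "a \<notin> set xs"
  proof
    assume "a \<in> set xs"
    then obtain k where k: "k < length xs" "xs ! k = a" by (meson in_set_conv_nth)
    have xs: "walk E xs" "distinct xs" "hd xs = d" "2 \<le> length xs \<longrightarrow> {d, xs ! 1} \<in> M"
      using R unfolding rerouting_def by auto
    then have "xs \<noteq> []" unfolding walk_def by simp
    have "a \<noteq> d" using simple_graph_edge_doubleton[OF sg ad(1)] by blast
    moreover have "xs ! 0 = d" using xs(3) \<open>xs \<noteq> []\<close> by (simp add: hd_conv_nth)
    ultimately have "k \<noteq> 0" using k(2) by (cases k) auto
    moreover have "k \<noteq> 1" using k xs(4) ad(2) by (auto simp: insert_commute)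
    moreover have "{xs ! k, hd xs} \<in> E" using k xs(3) ad(1) by simp
    ultimately have "is_cycle E (take (Suc k) xs)"
      using is_cycle_take[OF xs(2,1), of k] k(1) by simp
    then show False using acyclic by blast
  qed
  moreover have "e \<in> M'" if "e \<in> M" "e \<inter> set xs = {}" for e
    using R that unfolding rerouting_def by blast
  moreover have "e \<subseteq> set xs" if "e \<in> M" "e \<inter> set xs \<noteq> {}" for e
    using R that unfolding rerouting_def by blast
  moreover have "e \<in> M \<or> e \<subseteq> set xs" if "e \<in> M'" for e
    using R that unfolding rerouting_def by blast
  ultimately have "{e \<in> M'. a \<in> e} = {e \<in> M. a \<in> e}" by blast
  moreover have "max_matching E M'" "d \<notin> \<Union>M'" using R unfolding rerouting_def by auto
  ultimately show ?thesis using that by blast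
qed

lemma forest_GE_D_independent:
  assumes F: "forest V E"
  shows "independent_set E (GE_D V E)"
  unfolding independent_set_def
proof (intro ballI notI)
  fix u w assume "u \<in> GE_D V E" "w \<in> GE_D V E" and uw: "{u, w} \<in> E"
  then obtain Mu Mw where Mu: "max_matching E Mu" "u \<notin> \<Union>Mu"
    and Mw: "max_matching E Mw" "w \<notin> \<Union>Mw"
    unfolding GE_D_def by blast
  have "{u, w} \<notin> Mu" using Mu(2) by blast
  then obtain M' where M': "max_matching E M'" "w \<notin> \<Union>M'"
    and agree: "{e \<in> M'. u \<in> e} = {e \<in> Mu. u \<in> e}"
    using forest_exposing_matching_agreeing_at[OF F Mu(1) Mw(1) Mw(2) uw] by blast
  have "u \<notin> \<Union>M'" using agree Mu(2) by blast
  moreover have "simple_graph V E" using F unfolding forest_def by simp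
  ultimately show False
    using max_matching_not_augmentable[OF _ M'(1) uw _ M'(2)] by blast
qed

lemma forest_GE_A_matched_into_D:
  assumes F: "forest V E" and a: "a \<in> GE_A V E" and M: "max_matching E M" and ab: "{a, b} \<in> M"
  shows "b \<in> GE_D V E"
proof -
  have sg: "simple_graph V E" using F unfolding forest_def by simp
  obtain d where d: "d \<in> GE_D V E" "{a, d} \<in> E"
    using a unfolding GE_A_def neighbours_def by auto
  show ?thesis
  proof (cases "b = d")
    case False
    have m: "matching E M" using M unfolding max_matching_def by simp
    have "{a, d} \<notin> M"
      using matching_edge_unique[OF m _ ab, of "{a, d}" a] False by (auto simp: doubleton_eq_iff)
    moreover obtain N where "max_matching E N" "d \<notin> \<Union>N" using d(1) unfolding GE_D_def by blast
    ultimately obtain M' where M': "max_matching E M'" "d \<notin> \<Union>M'"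
      and agree: "{e \<in> M'. a \<in> e} = {e \<in> M. a \<in> e}"
      using forest_exposing_matching_agreeing_at[OF F M _ _ d(2)] by metis
    have "{b, a} \<in> M'" using agree ab by (auto simp: insert_commute)
    have "b \<in> V" using ab m simple_graph_edge_doubleton[OF sg] unfolding matching_def by blast
    then show ?thesis
      using max_matching_shift[OF sg M'(1) \<open>{b, a} \<in> M'\<close> d(2) M'(2)] unfolding GE_D_def by blast
  qed (use d in simp)
qed

text \<open>The last vertex of a longest path inside S is adjacent within S only to its
  predecessor.\<close>
lemma forest_low_degree_vertex:
  assumes F: "forest V E" and S: "finite S" "S \<noteq> {}"
  obtains v where "v \<in> S" "card {e \<in> induced_edges E S. v \<in> e} \<le> 1"
proof -
  have sg: "simple_graph V E" and acyclic: "\<And>xs. \<not> is_cycle E xs"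
    using F unfolding forest_def by auto
  define P where "P = {xs. distinct xs \<and> set xs \<subseteq> S \<and> walk (induced_edges E S) xs}"
  have "finite P" unfolding P_def
    by (rule finite_subset[OF _ finite_subset_distinct[OF S(1)]]) auto
  moreover obtain s where "s \<in> S" using S(2) by blast
  then have "[s] \<in> P" unfolding P_def by (simp add: walk_singleton)
  ultimately have "Max (length ` P) \<in> length ` P" by (intro Max_in) auto
  then obtain xs where "xs \<in> P" "length xs = Max (length ` P)" by auto
  then have xs: "distinct xs" "set xs \<subseteq> S" "walk (induced_edges E S) xs"
    and longest: "\<And>ys. ys \<in> P \<Longrightarrow> length ys \<le> length xs"
    using \<open>finite P\<close> unfolding P_def by auto
  have "xs \<noteq> []" using xs(3) unfolding walk_def by simp
  define v where "v = last xs"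
  have "{e \<in> induced_edges E S. v \<in> e} \<subseteq> {{v, xs ! (length xs - 2)}}"
  proof
    fix e assume e: "e \<in> {e \<in> induced_edges E S. v \<in> e}"
    then have "e \<in> E" "e \<subseteq> S" "v \<in> e" unfolding induced_edges_def by auto
    then obtain u where u: "e = {v, u}" "u \<noteq> v" "u \<in> S"
      using simple_graph_edge_at[OF sg] by (metis insert_subset)
    have "u \<in> set xs"
    proof (rule ccontr)
      assume "u \<notin> set xs"
      moreover have "walk (induced_edges E S) (xs @ [u])"
        using walk_snoc[OF xs(3)] e u(1) v_def by simp
      ultimately have "xs @ [u] \<in> P" unfolding P_def using xs u(3) by auto
      then show False using longest by fastforce
    qed
    then obtain j where j: "j < length xs" "xs ! j = u" by (meson in_set_conv_nth)
    have "j \<noteq> length xs - 1"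
      using j u(2) \<open>xs \<noteq> []\<close> by (auto simp: v_def last_conv_nth)
    moreover have "j + 2 \<ge> length xs"
    proof (rule ccontr)
      assume "\<not> j + 2 \<ge> length xs"
      moreover have "last (drop j xs) = v" "hd (drop j xs) = u"
        using j by (auto simp: v_def hd_drop_conv_nth)
      ultimately have "is_cycle E (drop j xs)"
        using xs(1) walk_drop[OF walk_mono[OF xs(3)] j(1)] \<open>e \<in> E\<close> u(1)
        unfolding is_cycle_def induced_edges_def by (auto simp: insert_commute)
      then show False using acyclic by blast
    qed
    ultimately have "j = length xs - 2" using j(1) by arith
    then show "e \<in> {{v, xs ! (length xs - 2)}}" using j(2) u(1) by simp
  qed
  then have "card {e \<in> induced_edges E S. v \<in> e} \<le> 1"
    using card_mono[of "{{v, xs ! (length xs - 2)}}"] by fastforce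
  moreover have "v \<in> S" using \<open>xs \<noteq> []\<close> xs(2) by (auto simp: v_def)
  ultimately show ?thesis using that by blast
qed

lemma forest_card_induced_edges:
  assumes F: "forest V E"
  shows "finite S \<Longrightarrow> S \<noteq> {} \<Longrightarrow> card (induced_edges E S) \<le> card S - 1"
proof (induction "card S" arbitrary: S rule: less_induct)
  case less
  have sg: "simple_graph V E" using F unfolding forest_def by simp
  have fin: "finite (induced_edges E T)" for T
    using simple_graph_finite_edges[OF sg] unfolding induced_edges_def by simp
  obtain v where v: "v \<in> S" "card {e \<in> induced_edges E S. v \<in> e} \<le> 1"
    using forest_low_degree_vertex[OF F less.prems] by blast
  show ?case
  proof (cases "S = {v}")
    case True
    have "e \<notin> E" if "e \<subseteq> {v}" for e
      using card_mono[OF _ that] simple_graph_card_edge[OF sg, of e] by auto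
    then have "induced_edges E S = {}" using True unfolding induced_edges_def by blast
    then show ?thesis by simp
  next
    case False
    then have ne: "S - {v} \<noteq> {}" using v(1) by blast
    have "induced_edges E S \<subseteq> induced_edges E (S - {v}) \<union> {e \<in> induced_edges E S. v \<in> e}"
      unfolding induced_edges_def by auto
    then have "card (induced_edges E S)
        \<le> card (induced_edges E (S - {v}) \<union> {e \<in> induced_edges E S. v \<in> e})"
      using fin by (intro card_mono) auto
    also have "\<dots> \<le> card (induced_edges E (S - {v})) + card {e \<in> induced_edges E S. v \<in> e}"
      by (rule card_Un_le)
    also have "\<dots> \<le> card (S - {v}) - 1 + 1"
      using less.hyps[OF card_Diff1_less[OF less.prems(1) v(1)] finite_Diff[OF less.prems(1)] ne]
        v(2) by linarith
    also have "\<dots> = card S - 1"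
    proof -
      have "0 < card (S - {v})" using ne less.prems(1) by (simp add: card_gt_0_iff)
      then show ?thesis using card_Diff_singleton[OF v(1)] by simp
    qed
    finally show ?thesis .
  qed
qed

lemma walk_leaves_set:
  "walk E xs \<Longrightarrow> hd xs \<in> S \<Longrightarrow> last xs \<notin> S \<Longrightarrow>
    \<exists>i < length xs - 1. xs ! i \<in> S \<and> xs ! (i + 1) \<notin> S"
proof (induction xs)
  case (Cons a xs)
  then have "xs \<noteq> []" by auto
  show ?case
  proof (cases "hd xs \<in> S")
    case True
    then obtain i where "i < length xs - 1" "xs ! i \<in> S" "xs ! (i + 1) \<notin> S"
      using Cons walk_tl[OF Cons.prems(1) \<open>xs \<noteq> []\<close>] \<open>xs \<noteq> []\<close> by auto
    then show ?thesis by (intro exI[of _ "Suc i"]) auto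
  next
    case False
    then show ?thesis using Cons.prems \<open>xs \<noteq> []\<close> by (intro exI[of _ 0]) (auto simp: hd_conv_nth)
  qed
qed (simp add: walk_def)

lemma connected_graph_crossing_edge:
  assumes "connected_graph V E" "s \<in> S" "S \<subseteq> V" "t \<in> V - S"
  obtains u w where "u \<in> S" "w \<in> V - S" "{u, w} \<in> E"
proof -
  obtain xs where xs: "walk E xs" "set xs \<subseteq> V" "hd xs = s" "last xs = t"
    using assms unfolding connected_graph_def by blast
  then obtain i where i: "i < length xs - 1" "xs ! i \<in> S" "xs ! (i + 1) \<notin> S"
    using walk_leaves_set[of E xs S] assms by auto
  then have "{xs ! i, xs ! (i + 1)} \<in> E" "xs ! (i + 1) \<in> V"
    using xs(1,2) unfolding walk_def by (auto simp: subset_iff)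
  then show ?thesis using that i by blast
qed

text \<open>Grow the set along crossing edges: each added vertex brings a new induced edge.\<close>
lemma connected_graph_growing_subset:
  assumes "connected_graph V E" "finite V" "1 \<le> k" "k \<le> card V"
  shows "\<exists>S \<subseteq> V. card S = k \<and> k - 1 \<le> card (induced_edges E S)"
  using assms(3,4)
proof (induction k rule: dec_induct)
  case base
  obtain v where "v \<in> V" using assms(3,4) by fastforce
  then show ?case by (intro exI[of _ "{v}"]) auto
next
  case (step n)
  then obtain S where S: "S \<subseteq> V" "card S = n" "n - 1 \<le> card (induced_edges E S)" by auto
  have "finite S" using S(1) assms(2) finite_subset by blast
  have "S \<noteq> {}" using S(2) step(1) by auto
  then obtain s where "s \<in> S" by blast
  have "S \<noteq> V" using S(2) step.hyps(2) assms(4) by auto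
  then obtain t where "t \<in> V - S" using S(1) by blast
  with \<open>s \<in> S\<close> obtain u w where uw: "u \<in> S" "w \<in> V - S" "{u, w} \<in> E"
    using connected_graph_crossing_edge[OF assms(1) _ S(1)] by blast
  have "insert {u, w} (induced_edges E S) \<subseteq> induced_edges E (insert w S)"
    using uw unfolding induced_edges_def by auto
  moreover have "{u, w} \<notin> induced_edges E S" using uw unfolding induced_edges_def by auto
  moreover have "finite (induced_edges E (insert w S))"
  proof (rule finite_subset)
    show "induced_edges E (insert w S) \<subseteq> Pow (insert w S)" unfolding induced_edges_def by auto
  qed (use \<open>finite S\<close> in simp)
  ultimately have "Suc (card (induced_edges E S)) \<le> card (induced_edges E (insert w S))"
    using card_mono card_insert_disjoint finite_subset by (metis (no_types, lifting) subset_insertI)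
  then show ?case
    using S uw \<open>finite S\<close> by (intro exI[of _ "insert w S"]) auto
qed

lemma connected_graph_card_edges:
  assumes "simple_graph V E" "connected_graph V E"
  shows "card V - 1 \<le> card E"
proof (cases "V = {}")
  case False
  have "finite V" using simple_graph_finite_vertices[OF assms(1)] .
  then have "1 \<le> card V" using False by (simp add: Suc_le_eq card_gt_0_iff)
  then obtain S where "S \<subseteq> V" "card S = card V" "card V - 1 \<le> card (induced_edges E S)"
    using connected_graph_growing_subset[OF assms(2) \<open>finite V\<close>] by blast
  moreover have "induced_edges E S \<subseteq> E" unfolding induced_edges_def by auto
  ultimately show ?thesis
    using card_mono[OF simple_graph_finite_edges[OF assms(1)]] by (meson le_trans)
qed simp

lemma GE_A_D_disjoint: "GE_A V E \<inter> GE_D V E = {}"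
  unfolding GE_A_def by blast

lemma GE_A_subset: "simple_graph V E \<Longrightarrow> GE_A V E \<subseteq> V"
  unfolding GE_A_def neighbours_def using simple_graph_edge_doubleton by fastforce

lemma GE_D_subset: "GE_D V E \<subseteq> V"
  unfolding GE_D_def by blast

lemma card_GE_partition:
  assumes "simple_graph V E"
  shows "card V = card (GE_A V E) + card (GE_D V E) + card (GE_C V E)"
proof -
  have "finite V" using simple_graph_finite_vertices[OF assms] .
  have sub: "GE_A V E \<union> GE_D V E \<subseteq> V" using GE_A_subset[OF assms] GE_D_subset[of V E] by blast
  then have fin: "finite (GE_A V E)" "finite (GE_D V E)"
    using \<open>finite V\<close> by (auto intro: finite_subset)
  have "card (GE_A V E \<union> GE_D V E) = card (GE_A V E) + card (GE_D V E)"
    using card_Un_disjoint[OF fin GE_A_D_disjoint] .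
  moreover have "card (GE_C V E) = card V - card (GE_A V E \<union> GE_D V E)"
    unfolding GE_C_def using sub fin by (simp add: card_Diff_subset)
  moreover have "card (GE_A V E \<union> GE_D V E) \<le> card V" using card_mono[OF \<open>finite V\<close> sub] .
  ultimately show ?thesis by linarith
qed

lemma GE_D_neighbour: "d \<in> GE_D V E \<Longrightarrow> w \<notin> GE_D V E \<Longrightarrow> {d, w} \<in> E \<Longrightarrow> w \<in> GE_A V E"
  unfolding GE_A_def neighbours_def by (auto simp: insert_commute)

text \<open>D is independent, and its neighbours outside D lie in A.\<close>
lemma forest_GE_edge_count:
  assumes F: "forest V E" and e: "e \<in> E"
  shows "card (e \<inter> GE_A V E) + (if e \<subseteq> GE_C V E then 1 else 0)
    = 1 + (if e \<subseteq> GE_A V E then 1 else 0)"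
proof -
  have sg: "simple_graph V E" using F unfolding forest_def by simp
  obtain u w where uw: "e = {u, w}" "u \<noteq> w" "u \<in> V" "w \<in> V"
    using e sg unfolding simple_graph_def by blast
  have "\<not> (u \<in> GE_D V E \<and> w \<in> GE_D V E)"
    using forest_GE_D_independent[OF F] e uw(1) unfolding independent_set_def by blast
  moreover have "u \<in> GE_D V E \<Longrightarrow> w \<notin> GE_D V E \<Longrightarrow> w \<in> GE_A V E"
    "w \<in> GE_D V E \<Longrightarrow> u \<notin> GE_D V E \<Longrightarrow> u \<in> GE_A V E"
    using GE_D_neighbour[of _ V E] e uw(1) by (auto simp: insert_commute)
  ultimately show ?thesis
    using uw GE_A_D_disjoint[of V E] unfolding GE_C_def by (auto simp: Int_insert_left)
qed

lemma sum_degree_eq_sum_card_Int: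
  assumes "finite A" "finite E"
  shows "(\<Sum>a\<in>A. degree E a) = (\<Sum>e\<in>E. card (e \<inter> A))"
proof -
  have "(\<Sum>a\<in>A. degree E a) = (\<Sum>a\<in>A. \<Sum>e\<in>E. if a \<in> e then 1 else 0)"
    unfolding degree_def using assms(2) by (simp add: sum.If_cases Int_def)
  also have "\<dots> = (\<Sum>e\<in>E. \<Sum>a\<in>A. if a \<in> e then 1 else 0)" by (rule sum.swap)
  also have "\<dots> = (\<Sum>e\<in>E. card (e \<inter> A))"
    using assms(1) by (simp add: sum.If_cases Int_commute Int_def)
  finally show ?thesis .
qed

lemma forest_sum_degree_GE_A:
  assumes F: "forest V E"
  shows "(\<Sum>a\<in>GE_A V E. degree E a) + card (induced_edges E (GE_C V E))
    = card E + card (induced_edges E (GE_A V E))"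
proof -
  have sg: "simple_graph V E" using F unfolding forest_def by simp
  have fin: "finite E" "finite (GE_A V E)"
    using simple_graph_finite_edges[OF sg]
      finite_subset[OF GE_A_subset[OF sg] simple_graph_finite_vertices[OF sg]] by auto
  have "(\<Sum>a\<in>GE_A V E. degree E a) + card (induced_edges E (GE_C V E))
      = (\<Sum>e\<in>E. card (e \<inter> GE_A V E) + (if e \<subseteq> GE_C V E then 1 else 0))"
    using fin
    by (simp add: sum_degree_eq_sum_card_Int sum.distrib sum.If_cases induced_edges_def Int_def)
  also have "\<dots> = (\<Sum>e\<in>E. 1 + (if e \<subseteq> GE_A V E then 1 else 0))"
    using forest_GE_edge_count[OF F] by simp
  also have "\<dots> = (\<Sum>e\<in>E. 1) + (\<Sum>e\<in>E. if e \<subseteq> GE_A V E then 1 else 0)"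
    by (rule sum.distrib)
  also have "\<dots> = card E + card (induced_edges E (GE_A V E))"
    using fin by (simp add: sum.If_cases induced_edges_def Int_def)
  finally show ?thesis .
qed

lemma tree_GE_card_bound:
  assumes T: "is_tree V E"
  shows "card (GE_A V E) + card (GE_D V E) + card (induced_edges E (GE_A V E))
      + (if GE_C V E = {} then 0 else 1) \<le> (\<Sum>a\<in>GE_A V E. degree E a) + 1"
proof -
  have sg: "simple_graph V E" and "connected_graph V E" "V \<noteq> {}"
    using T unfolding is_tree_def by auto
  then have edges: "card V - 1 \<le> card E" "1 \<le> card V"
    using connected_graph_card_edges[OF sg] simple_graph_finite_vertices[OF sg]
    by (auto simp: Suc_le_eq card_gt_0_iff)
  have "card (induced_edges E (GE_C V E)) + (if GE_C V E = {} then 0 else 1) \<le> card (GE_C V E)"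
  proof (cases "GE_C V E = {}")
    case True
    then have "induced_edges E (GE_C V E) = {}"
      using simple_graph_card_edge[OF sg] unfolding induced_edges_def by fastforce
    then show ?thesis using True by simp
  next
    case False
    moreover have "finite (GE_C V E)"
      using simple_graph_finite_vertices[OF sg] unfolding GE_C_def by simp
    ultimately have "card (induced_edges E (GE_C V E)) \<le> card (GE_C V E) - 1" "0 < card (GE_C V E)"
      using forest_card_induced_edges[OF tree_imp_forest[OF T]] by (auto simp: card_gt_0_iff)
    then show ?thesis using False by simp
  qed
  then show ?thesis
    using forest_sum_degree_GE_A[OF tree_imp_forest[OF T]] card_GE_partition[OF sg] edges
    by linarith
qed

text \<open>The partners of A and the exposed vertices are disjoint subsets of D.\<close>
lemma forest_card_GE_A_exposed_le:
  assumes F: "forest V E" and M: "max_matching E M"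
  shows "card (GE_A V E) + card (V - \<Union>M) \<le> card (GE_D V E)"
proof -
  have sg: "simple_graph V E" using F unfolding forest_def by simp
  have m: "matching E M" using M unfolding max_matching_def by simp
  have "finite V" using simple_graph_finite_vertices[OF sg] .
  have exposed: "V - \<Union>M \<subseteq> GE_D V E" using M unfolding GE_D_def by blast
  have "\<exists>b. {a, b} \<in> M" if "a \<in> GE_A V E" for a
  proof -
    have "a \<in> V" using that GE_A_subset[OF sg] by blast
    moreover have "a \<notin> GE_D V E" using that GE_A_D_disjoint[of V E] by blast
    ultimately obtain e where "e \<in> M" "a \<in> e" using exposed by blast
    moreover have "e \<in> E" using \<open>e \<in> M\<close> m unfolding matching_def by blast
    ultimately show ?thesis using simple_graph_edge_at[OF sg \<open>e \<in> E\<close> \<open>a \<in> e\<close>] by metis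
  qed
  then obtain p where p: "\<And>a. a \<in> GE_A V E \<Longrightarrow> {a, p a} \<in> M" by metis
  have pD: "p a \<in> GE_D V E" if "a \<in> GE_A V E" for a
    using forest_GE_A_matched_into_D[OF F that M p[OF that]] .
  have "inj_on p (GE_A V E)"
  proof (rule inj_onI)
    fix a a' assume a: "a \<in> GE_A V E" "a' \<in> GE_A V E" "p a = p a'"
    then have "{a, p a} = {a', p a'}"
      using matching_edge_unique[OF m p[OF a(1)] p[OF a(2)], of "p a"] by simp
    moreover have "a \<noteq> p a"
    proof
      assume "a = p a"
      then have "a \<in> GE_A V E \<inter> GE_D V E" using a(1) pD[OF a(1)] by simp
      then show False using GE_A_D_disjoint[of V E] by simp
    qed
    ultimately show "a = a'" using a(3) by (auto simp: doubleton_eq_iff)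
  qed
  then have "card (GE_A V E) + card (V - \<Union>M) = card (p ` GE_A V E) + card (V - \<Union>M)"
    by (simp add: card_image)
  also have "\<dots> = card (p ` GE_A V E \<union> (V - \<Union>M))"
  proof (rule card_Un_disjoint[symmetric])
    show "finite (p ` GE_A V E)" "finite (V - \<Union>M)"
      using \<open>finite V\<close> GE_A_subset[OF sg] finite_subset by auto
    show "p ` GE_A V E \<inter> (V - \<Union>M) = {}" using p by blast
  qed
  also have "\<dots> \<le> card (GE_D V E)"
  proof (rule card_mono)
    show "finite (GE_D V E)" using finite_subset[OF GE_D_subset \<open>finite V\<close>] .
    show "p ` GE_A V E \<union> (V - \<Union>M) \<subseteq> GE_D V E" using pD exposed by blast
  qed
  finally show ?thesis .
qed

lemma card_vertices_max_matching:
  assumes sg: "simple_graph V E" and m: "matching E M"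
  shows "card V = 2 * card M + card (V - \<Union>M)"
proof -
  have "finite V" using simple_graph_finite_vertices[OF sg] .
  have "\<Union>M \<subseteq> V" using m simple_graph_edge_subset[OF sg] unfolding matching_def by blast
  then have "card V = card (\<Union>M) + card (V - \<Union>M)"
    using \<open>finite V\<close> card_Un_disjoint[of "\<Union>M" "V - \<Union>M"] finite_subset
    by (metis Diff_disjoint Diff_partition finite_Diff)
  then show ?thesis using card_Union_matching[OF sg m] by simp
qed

lemma tree_card_GE_D_le:
  assumes T: "is_tree V E" and deg: "\<forall>a\<in>GE_A V E. degree E a \<le> 3"
  shows "card (GE_D V E) \<le> 2 * card (GE_A V E) + 1"
proof -
  have "(\<Sum>a\<in>GE_A V E. degree E a) \<le> 3 * card (GE_A V E)"
    using sum_bounded_above[of "GE_A V E" "degree E" 3] deg by simp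
  then show ?thesis using tree_GE_card_bound[OF T] by linarith
qed

lemma tree_card_GE_D_eq:
  assumes T: "is_tree V E" and deg: "\<forall>a\<in>GE_A V E. degree E a \<le> 3"
    and eq: "card (GE_D V E) = 2 * card (GE_A V E) + 1"
  shows "connected_graph (GE_A V E \<union> GE_D V E) (induced_edges E (GE_A V E \<union> GE_D V E))"
    "\<forall>a\<in>GE_A V E. degree E a = 3" "independent_set E (GE_A V E)" "GE_C V E = {}"
proof -
  let ?A = "GE_A V E" and ?D = "GE_D V E" and ?C = "GE_C V E"
  have sg: "simple_graph V E" using T unfolding is_tree_def by simp
  have "(\<Sum>a\<in>?A. degree E a) \<le> 3 * card ?A"
    using sum_bounded_above[of ?A "degree E" 3] deg by simp
  then have C: "?C = {}" and sum: "(\<Sum>a\<in>?A. degree E a) = 3 * card ?A"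
    and "card (induced_edges E ?A) = 0"
    using tree_GE_card_bound[OF T] eq by (auto split: if_splits)
  then show "?C = {}" "independent_set E ?A"
    using simple_graph_finite_edges[OF sg]
    unfolding independent_set_def induced_edges_def by auto
  have "?A \<union> ?D = V" using C GE_A_subset[OF sg] GE_D_subset[of V E] unfolding GE_C_def by blast
  moreover have "induced_edges E V = E"
    using simple_graph_edge_subset[OF sg] unfolding induced_edges_def by blast
  ultimately show "connected_graph (?A \<union> ?D) (induced_edges E (?A \<union> ?D))"
    using T unfolding is_tree_def by simp
  show "\<forall>a\<in>?A. degree E a = 3"
  proof (rule ccontr)
    assume "\<not> (\<forall>a\<in>?A. degree E a = 3)"
    then have "\<exists>a\<in>?A. degree E a < 3" using deg by force
    moreover have "finite ?A"
      using finite_subset[OF GE_A_subset[OF sg] simple_graph_finite_vertices[OF sg]] .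
    ultimately have "(\<Sum>a\<in>?A. degree E a) < (\<Sum>a\<in>?A. 3)"
      using sum_strict_mono_ex1[of ?A "degree E" "\<lambda>_. 3"] deg by simp
    then show False using sum by simp
  qed
qed

lemma tree_matching_number_ge:
  assumes T: "is_tree V E" and deg: "\<forall>a\<in>GE_A V E. degree E a \<le> 3"
  shows "real (matching_number E) \<ge> (real (card V) - 1) / 3"
proof -
  have F: "forest V E" and sg: "simple_graph V E" using tree_imp_forest[OF T] T
    unfolding is_tree_def by auto
  obtain M where M: "max_matching E M"
    using max_matching_exists[OF simple_graph_finite_edges[OF sg]] by blast
  then have "card V = 2 * matching_number E + card (V - \<Union>M)"
    using card_vertices_max_matching[OF sg] unfolding max_matching_def by auto
  then have "card V \<le> 3 * matching_number E + 1"
    using forest_card_GE_A_exposed_le[OF F M] tree_card_GE_D_le[OF T deg] card_GE_partition[OF sg]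
    by linarith
  then have "real (card V) \<le> 3 * real (matching_number E) + 1"
    using of_nat_mono by fastforce
  then show ?thesis by simp
qed

theorem mainTheorem3:
  fixes V :: "'a set" and E :: "'a set set"
  assumes "is_tree V E"
    and "\<forall>a\<in>GE_A V E. degree E a \<le> 3"
  shows "card (GE_D V E) \<le> 2 * card (GE_A V E) + 1
    \<and> (card (GE_D V E) = 2 * card (GE_A V E) + 1 \<longrightarrow>
         connected_graph (GE_A V E \<union> GE_D V E) (induced_edges E (GE_A V E \<union> GE_D V E))
       \<and> (\<forall>a\<in>GE_A V E. degree E a = 3)
       \<and> independent_set E (GE_A V E)
       \<and> GE_C V E = {})
    \<and> real (matching_number E) \<ge> (real (card V) - 1) / 3"
  using tree_card_GE_D_le[OF assms] tree_card_GE_D_eq[OF assms] tree_matching_number_ge[OF assms]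
  by blast

end
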